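(* Let $\alpha$ be a formula containing no points-to atom with $\mathcal P(\alpha)\subseteq\mathcal P_l$, and let $\alpha'$ be a decoration of $\alpha$. If $(s,h')\models_{\mathrm{dec}(\mathcal R)}\alpha'$ and $(s,h')\rhd_{\mathrm{id}}(s,h)$, then $(s,h)\models_{\mathcal R}\alpha$.
   Context: Separation logic: variables $\mathcal V$, constant $\bot$; formulas from $x\not\approx x'$, $x\approx x'$, $x\mapsto(t_1,\dots,t_k)$, $p(x_1,\dots,x_n)$, $*$, $\vee$, $\exists$. SID: finite set of rules $p(x_1,\dots,x_n)\Leftarrow\pi$ ($\pi$ quantifier-free separating conjunction of atoms), existential variables $\mathrm{fv}(\pi)\setminus\{x_1,\dots,x_n\}$; $\mathcal P(\phi)$: predicates reachable (reflexively) from those of $\phi$ through rule bodies. Locations $\mathcal L$ with $\ell_\bot$; stores $s$ map variables and $\bot$ to $\mathcal L$ with $\bot\in\mathrm{dom}(s)$, $s(x)=\ell_\bot$ iff $x=\bot$; heaps are finite partial maps $\mathcal L\to\mathcal L^k$ with $\ell_\bot\notin$ domain; $\models_{\mathcal R}$ standard SL semantics (predicate atoms via a rule and an extension of the store to its existential variables). Standing assumptions: $\mathcal R$ is an SID of progressing rules $p(x_1,\dots,x_n)\Leftarrow x_1\mapsto(y_1,\dots,y_\kappa)*\rho$ ($\rho$ free of points-to), part of an entailment problem $(\phi,\psi,\mathcal R)$; $\mathcal P_l=\mathcal P(\phi)$; $\vec w=(w_1,\dots,w_\nu)$, $\nu>0$, the free variables of $\phi,\psi$, not occurring in $\mathcal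 R$; stores considered contain $w_1,\dots,w_\nu$ in their domain; every rule of $\mathcal R$ has exactly $\mu$ existential variables. $\vec\bot$ ($\vec\ell_\bot$) is $\kappa+\nu+\mu$ copies of $\bot$ ($\ell_\bot$); $\mathsf{bot}$ is a unary predicate with single rule $\mathsf{bot}(x)\Leftarrow x\mapsto\vec\bot$, included in $\mathrm{dec}(\mathcal R)$. Decorations: for $p\in\mathcal P_l$ of arity $n$ and $X\subseteq\{1,\dots,n\}$, $p_X$ is a fresh predicate of arity $n+\nu$. A decoration of a formula $\alpha$ without points-to atoms with $\mathcal P(\alpha)\subseteq\mathcal P_l$ replaces each atom $q(y_1,\dots,y_m)$ by some $q_X(y_1,\dots,y_m,\vec w)$ with $X\subseteq\{1,\dots,m\}$ chosen per atom. $\mathrm{dec}(\mathcal R)$ is the set of rules $p_X(x_1,\dots,x_n,\vec w)\Leftarrow x_1\mapsto(y_1,\dots,y_\kappa,\vec w,z_1,\dots,z_\mu)\sigma*\rho'*\mathop{*}_{i\in I}\mathsf{bot}(z_i)$ where $p(x_1,\dots,x_n)\Leftarrow x_1\mapsto(y_1,\dots,y_\kappa)*\rho$ is in $\mathcal R$, $X\subseteq\{1,\dots,n\}$, $\{z_1,\dots,z_\mu\}$ is the set of its existential variables, $\sigma$ is a substitution with $\mathrm{dom}(\sigma)\subseteq\{z_1,\dots,z_\mu\}$, $\mathrm{img}(\sigma)\subseteq\{x_1,\dots,x_n,w_1,\dots,w_\nu,z_1,\dots,z_\mu\}$, $\rho'$ is a decoration of $\rho\sigma$, and $I\subseteq\{1,\dots,\mu\}$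 with $z_i\notin\mathrm{dom}(\sigma)$ for $i\in I$. Expansion: for $h:\mathcal L\to\mathcal L^\kappa$ and $h':\mathcal L\to\mathcal L^{\kappa+\nu+\mu}$, $(s,h')\rhd_{\mathrm{id}}(s,h)$ iff $h'=\mathrm{main}(h')\uplus\mathrm{aux}(h')$ with: $\mathrm{dom}(\mathrm{main}(h'))=\mathrm{dom}(h)$; for $\ell\in\mathrm{dom}(\mathrm{main}(h'))$, $h'(\ell)=(h(\ell),s(w_1),\dots,s(w_\nu),b_1,\dots,b_\mu)$ for some $b_i$; for $\ell\in\mathrm{dom}(\mathrm{aux}(h'))$, $h'(\ell)=\vec\ell_\bot$ and $\ell$ is among the last $\mu$ components of $h'(\ell')$ for some $\ell'\in\mathrm{dom}(\mathrm{main}(h'))$. *)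

theory Defs
  imports Main
begin

datatype 'v trm = BotT | V 'v

datatype ('v, 'q) form =
    Neq "'v trm" "'v trm"
  | Eq "'v trm" "'v trm"
  | Pto "'v trm" "'v trm list"
  | Pred 'q "'v trm list"
  | Sep "('v, 'q) form" "('v, 'q) form"
  | Or "('v, 'q) form" "('v, 'q) form"
  | Ex 'v "('v, 'q) form"

fun fv_trm :: "'v trm \<Rightarrow> 'v set" where
  "fv_trm BotT = {}"
| "fv_trm (V x) = {x}"

fun fv :: "('v, 'q) form \<Rightarrow> 'v set" where
  "fv (Neq a b) = fv_trm a \<union> fv_trm b"
| "fv (Eq a b) = fv_trm a \<union> fv_trm b"
| "fv (Pto a ts) = fv_trm a \<union> \<Union>(fv_trm ` set ts)"
| "fv (Pred q ts) = \<Union>(fv_trm ` set ts)"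
| "fv (Sep a b) = fv a \<union> fv b"
| "fv (Or a b) = fv a \<union> fv b"
| "fv (Ex x a) = fv a - {x}"

fun preds :: "('v, 'q) form \<Rightarrow> 'q set" where
  "preds (Pred q ts) = {q}"
| "preds (Sep a b) = preds a \<union> preds b"
| "preds (Or a b) = preds a \<union> preds b"
| "preds (Ex x a) = preds a"
| "preds _ = {}"

fun no_pto :: "('v, 'q) form \<Rightarrow> bool" where
  "no_pto (Pto a ts) = False"
| "no_pto (Sep a b) = (no_pto a \<and> no_pto b)"
| "no_pto (Or a b) = (no_pto a \<and> no_pto b)"
| "no_pto (Ex x a) = no_pto a"
| "no_pto _ = True"

fun is_patom :: "('v, 'q) form \<Rightarrow> bool" where
  "is_patom (Neq a b) = True"
| "is_patom (Eq a b) = True"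
| "is_patom (Pred q ts) = True"
| "is_patom _ = False"

text \<open>A rule  q(x_1,...,x_n) <= x_1 |-> (y_1,...,y_k) * a_1 * ... * a_m  is represented
  as the tuple (q, [x_1..x_n], [y_1..y_k], [a_1..a_m]).\<close>
type_synonym ('v, 'q) rule = "'q \<times> 'v list \<times> 'v trm list \<times> ('v, 'q) form list"

fun body :: "('v, 'q) rule \<Rightarrow> ('v, 'q) form" where
  "body (q, xs, ys, as) = foldl Sep (Pto (V (hd xs)) ys) as"

fun params :: "('v, 'q) rule \<Rightarrow> 'v list" where
  "params (q, xs, ys, as) = xs"

definition exvars :: "('v, 'q) rule \<Rightarrow> 'v set" where
  "exvars r = fv (body r) - set (params r)"

definition rule_vars :: "('v, 'q) rule \<Rightarrow> 'v set" where
  "rule_vars r = set (params r) \<union> fv (body r)"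

fun progressing :: "nat \<Rightarrow> ('v, 'q) rule \<Rightarrow> bool" where
  "progressing k (q, xs, ys, as) =
     (xs \<noteq> [] \<and> distinct xs \<and> length ys = k \<and> (\<forall>a\<in>set as. is_patom a))"

text \<open>P(phi): predicates reachable (reflexively) from those of phi.\<close>
inductive_set reach :: "('v, 'q) rule set \<Rightarrow> 'q set \<Rightarrow> 'q set" for R P where
  base: "q \<in> P \<Longrightarrow> q \<in> reach R P"
| step: "q \<in> reach R P \<Longrightarrow> (q, xs, ys, as) \<in> R \<Longrightarrow> a \<in> set as \<Longrightarrow> q' \<in> preds a
           \<Longrightarrow> q' \<in> reach R P"

type_synonym 'l heap = "'l \<rightharpoonup> 'l list"

fun ev :: "'l \<Rightarrow> ('v \<Rightarrow> 'l) \<Rightarrow> 'v trm \<Rightarrow> 'l" where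
  "ev lb s BotT = lb"
| "ev lb s (V x) = s x"

text \<open>Satisfaction (s,h) |=_R phi; lb is the location l_bot; stores map every variable to a
  location different from lb (and bot to lb, via ev).\<close>
inductive sat :: "('v, 'q) rule set \<Rightarrow> 'l \<Rightarrow> ('v \<Rightarrow> 'l) \<Rightarrow> 'l heap \<Rightarrow> ('v, 'q) form \<Rightarrow> bool"
  for R lb where
  sat_neq: "ev lb s a \<noteq> ev lb s b \<Longrightarrow> h = Map.empty \<Longrightarrow> sat R lb s h (Neq a b)"
| sat_eq: "ev lb s a = ev lb s b \<Longrightarrow> h = Map.empty \<Longrightarrow> sat R lb s h (Eq a b)"
| sat_pto: "ev lb s a \<noteq> lb \<Longrightarrow> h = [ev lb s a \<mapsto> map (ev lb s) ts] \<Longrightarrow> sat R lb s h (Pto a ts)"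
| sat_sep: "dom h1 \<inter> dom h2 = {} \<Longrightarrow> h = h1 ++ h2 \<Longrightarrow> sat R lb s h1 a \<Longrightarrow> sat R lb s h2 b
            \<Longrightarrow> sat R lb s h (Sep a b)"
| sat_or1: "sat R lb s h a \<Longrightarrow> sat R lb s h (Or a b)"
| sat_or2: "sat R lb s h b \<Longrightarrow> sat R lb s h (Or a b)"
| sat_ex: "l \<noteq> lb \<Longrightarrow> sat R lb (s(x := l)) h a \<Longrightarrow> sat R lb s h (Ex x a)"
| sat_pred: "(q, xs, ys, as) \<in> R \<Longrightarrow> length xs = length ts \<Longrightarrow> (\<forall>v. s' v \<noteq> lb)
             \<Longrightarrow> (\<forall>i<length xs. s' (xs ! i) = ev lb s (ts ! i))
             \<Longrightarrow> sat R lb s' h (body (q, xs, ys, as)) \<Longrightarrow> sat R lb s h (Pred q ts)"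

text \<open>Decorated predicate symbols p_X (X a set of argument positions, 1-based) and bot.\<close>
datatype 'p dpred = DecP 'p "nat set" | BotP

fun decor :: "'v list \<Rightarrow> ('v, 'p) form \<Rightarrow> ('v, 'p dpred) form \<Rightarrow> bool" where
  "decor ws (Neq a b) f = (f = Neq a b)"
| "decor ws (Eq a b) f = (f = Eq a b)"
| "decor ws (Pto a ts) f = False"
| "decor ws (Pred q ts) f =
     (\<exists>X. X \<subseteq> {1..length ts} \<and> f = Pred (DecP q X) (ts @ map V ws))"
| "decor ws (Sep a b) f = (case f of Sep a' b' \<Rightarrow> decor ws a a' \<and> decor ws b b' | _ \<Rightarrow> False)"
| "decor ws (Or a b) f = (case f of Or a' b' \<Rightarrow> decor ws a a' \<and> decor ws b b' | _ \<Rightarrow> False)"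
| "decor ws (Ex x a) f = (case f of Ex x' a' \<Rightarrow> x' = x \<and> decor ws a a' | _ \<Rightarrow> False)"

fun trm_subst :: "('v \<Rightarrow> 'v) \<Rightarrow> 'v trm \<Rightarrow> 'v trm" where
  "trm_subst \<sigma> BotT = BotT"
| "trm_subst \<sigma> (V x) = V (\<sigma> x)"

text \<open>Substitution, applied only to quantifier-free atoms (rule bodies).\<close>
fun subst :: "('v \<Rightarrow> 'v) \<Rightarrow> ('v, 'q) form \<Rightarrow> ('v, 'q) form" where
  "subst \<sigma> (Neq a b) = Neq (trm_subst \<sigma> a) (trm_subst \<sigma> b)"
| "subst \<sigma> (Eq a b) = Eq (trm_subst \<sigma> a) (trm_subst \<sigma> b)"
| "subst \<sigma> (Pto a ts) = Pto (trm_subst \<sigma> a) (map (trm_subst \<sigma>) ts)"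
| "subst \<sigma> (Pred q ts) = Pred q (map (trm_subst \<sigma>) ts)"
| "subst \<sigma> (Sep a b) = Sep (subst \<sigma> a) (subst \<sigma> b)"
| "subst \<sigma> (Or a b) = Or (subst \<sigma> a) (subst \<sigma> b)"
| "subst \<sigma> (Ex x a) = Ex x (subst \<sigma> a)"

text \<open>dec(R), for points-to arity kappa, mu existential variables per rule, set Pl of
  predicates and the vector ws of free variables.  The existential variables z_1..z_mu are
  listed as zs (indices 0-based here), the substitution sigma is a function 'v => 'v whose
  domain is {v. sigma v ~= v}, and I is a set of 0-based indices into zs.
  The rule for bot is included (for every choice of its formal parameter name).\<close>
definition decR :: "nat \<Rightarrow> nat \<Rightarrow> 'p set \<Rightarrow> 'v list \<Rightarrow> ('v, 'p) rule set
                     \<Rightarrow> ('v, 'p dpred) rule set" where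
  "decR k m Pl ws R =
    {(DecP p X, xs @ ws,
      map (trm_subst \<sigma>) ys @ map V ws @ map (\<lambda>z. V (\<sigma> z)) zs,
      as' @ map (\<lambda>i. Pred BotP [V (zs ! i)]) (sorted_list_of_set I))
     | p xs ys as X zs \<sigma> as' I.
        (p, xs, ys, as) \<in> R \<and> p \<in> Pl \<and> X \<subseteq> {1..length xs}
        \<and> distinct zs \<and> set zs = exvars (p, xs, ys, as)
        \<and> (\<forall>v. \<sigma> v \<noteq> v \<longrightarrow> v \<in> set zs \<and> \<sigma> v \<in> set xs \<union> set ws \<union> set zs)
        \<and> list_all2 (decor ws) (map (subst \<sigma>) as) as'
        \<and> I \<subseteq> {0..<length zs} \<and> (\<forall>i\<in>I. \<sigma> (zs ! i) = zs ! i)}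
    \<union> {(BotP, [x], replicate (k + length ws + m) BotT, []) | x. True}"

text \<open>expands lb k m ws s h' h  is  (s,h') |>_id (s,h).\<close>
definition expands :: "'l \<Rightarrow> nat \<Rightarrow> nat \<Rightarrow> 'v list \<Rightarrow> ('v \<Rightarrow> 'l) \<Rightarrow> 'l heap \<Rightarrow> 'l heap \<Rightarrow> bool" where
  "expands lb k m ws s h' h =
    (\<exists>M A. h' = M ++ A \<and> dom M \<inter> dom A = {} \<and> dom M = dom h
       \<and> (\<forall>l\<in>dom M. \<exists>bs. length bs = m \<and> M l = Some (the (h l) @ map s ws @ bs))
       \<and> (\<forall>l\<in>dom A. A l = Some (replicate (k + length ws + m) lb)
              \<and> (\<exists>l'\<in>dom M. l \<in> set (drop (k + length ws) (the (M l'))))))"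

end

theory Submission
  imports Defs
begin

(* A rule body of dec(R) is the sigma-instance
   of a body of R in which the points-to tuple is padded beyond position kappa (with the values of
   w_1..w_nu and the z_i) and bot atoms are adjoined.  Main cells of h' truncated to kappa entries
   are the cells of h, while bot atoms are satisfied only by auxiliary cells, which lie outside
   dom h.  So restricting the heap of every subderivation to dom h gives a model of the undecorated
   formula, for the store composed with sigma inside a rule body. *)

inductive_cases sat_NeqE: "sat R lb s h (Neq a b)"
inductive_cases sat_EqE: "sat R lb s h (Eq a b)"
inductive_cases sat_PtoE: "sat R lb s h (Pto a ts)"
inductive_cases sat_SepE: "sat R lb s h (Sep a b)"
inductive_cases sat_OrE: "sat R lb s h (Or a b)"
inductive_cases sat_PredE: "sat R lb s h (Pred q ts)"

fun qfree :: "('v, 'q) form \<Rightarrow> bool" where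
  "qfree (Ex x a) = False"
| "qfree (Sep a b) = (qfree a \<and> qfree b)"
| "qfree (Or a b) = (qfree a \<and> qfree b)"
| "qfree _ = True"

lemma qfree_foldl_Sep: "qfree (foldl Sep a bs) \<longleftrightarrow> qfree a \<and> (\<forall>b\<in>set bs. qfree b)"
  by (induction bs arbitrary: a) auto

lemma qfree_body: "progressing \<kappa> r \<Longrightarrow> qfree (body r)"
  by (cases r) (auto simp: qfree_foldl_Sep elim!: is_patom.elims)

lemma subst_foldl_Sep: "subst \<sigma> (foldl Sep a bs) = foldl Sep (subst \<sigma> a) (map (subst \<sigma>) bs)"
  by (induction bs arbitrary: a) auto

lemma ev_trm_subst: "ev lb s (trm_subst \<sigma> t) = ev lb (s \<circ> \<sigma>) t"
  by (cases t) auto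

lemma sat_subst:
  "sat R lb s h (subst \<sigma> a) \<Longrightarrow> qfree a \<Longrightarrow> sat R lb (s \<circ> \<sigma>) h a"
proof (induction a arbitrary: h)
  case (Pred q ts)
  then show ?case
    by (auto elim!: sat_PredE intro!: sat_pred simp: ev_trm_subst comp_def)
qed (auto elim!: sat_NeqE sat_EqE sat_PtoE sat_SepE sat_OrE intro: sat.intros
          simp: ev_trm_subst comp_def)

(* The first padding
   entry is a variable (w_1), so its value tells main cells apart from the all-bot cells. *)
inductive padded_decor :: "nat \<Rightarrow> 'v list \<Rightarrow> ('v, 'p) form \<Rightarrow> ('v, 'p dpred) form \<Rightarrow> bool"
  for \<kappa> ws where
  decor: "decor ws a f \<Longrightarrow> padded_decor \<kappa> ws a f"
| pto: "length ts = \<kappa> \<Longrightarrow> padded_decor \<kappa> ws (Pto x ts) (Pto x (ts @ V w # us))"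
| sep: "padded_decor \<kappa> ws a f \<Longrightarrow> padded_decor \<kappa> ws b g \<Longrightarrow> padded_decor \<kappa> ws (Sep a b) (Sep f g)"
| sep_bot: "padded_decor \<kappa> ws a f \<Longrightarrow> padded_decor \<kappa> ws a (Sep f (Pred BotP ts))"

lemma decor_not_Pto: "\<not> decor ws a (Pto x ts)"
  by (cases a) auto

lemma padded_decor_iff_decor:
  assumes "\<And>f1 f2. f \<noteq> Sep f1 f2" and "\<And>x ts. f \<noteq> Pto x ts"
  shows "padded_decor \<kappa> ws a f \<longleftrightarrow> decor ws a f"
proof
  show "padded_decor \<kappa> ws a f \<Longrightarrow> decor ws a f"
    by (erule padded_decor.cases) (use assms in auto)
qed (rule padded_decor.decor)

lemma padded_decor_PtoE:
  assumes "padded_decor \<kappa> ws a (Pto x us)"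
  obtains ts w vs where "a = Pto x ts" "us = ts @ V w # vs" "length ts = \<kappa>"
  using assms by (cases rule: padded_decor.cases) (auto simp: decor_not_Pto)

lemma padded_decor_SepE:
  assumes "padded_decor \<kappa> ws a (Sep f g)"
  obtains b c where "a = Sep b c" "padded_decor \<kappa> ws b f" "padded_decor \<kappa> ws c g"
  | ts where "padded_decor \<kappa> ws a f" "g = Pred BotP ts"
  using assms
proof (cases rule: padded_decor.cases)
  case decor
  then show ?thesis
    using that(1) by (cases a) (auto intro: padded_decor.decor)
qed (use that in auto)

lemma padded_decor_foldl_Sep:
  "list_all2 (padded_decor \<kappa> ws) bs gs \<Longrightarrow> padded_decor \<kappa> ws a f
    \<Longrightarrow> padded_decor \<kappa> ws (foldl Sep a bs) (foldl Sep f gs)"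
proof (induction bs gs arbitrary: a f rule: list_all2_induct)
  case (Cons b bs g gs)
  then show ?case by (simp add: padded_decor.sep)
qed simp

lemma padded_decor_foldl_bot:
  "padded_decor \<kappa> ws a f \<Longrightarrow> padded_decor \<kappa> ws a (foldl Sep f (map (\<lambda>t. Pred BotP [t]) ts))"
  by (induction ts arbitrary: f) (auto intro: padded_decor.sep_bot)

lemma decR_body_padded_decor:
  assumes rule: "(DecP q X, xs', ys', as') \<in> decR \<kappa> \<mu> Pl ws R"
    and progressing: "\<forall>r\<in>R. progressing \<kappa> r" and "ws \<noteq> []"
  obtains xs ys as \<sigma> where "(q, xs, ys, as) \<in> R" "xs' = xs @ ws" "\<forall>x\<in>set xs. \<sigma> x = x"
    "padded_decor \<kappa> ws (subst \<sigma> (body (q, xs, ys, as))) (body (DecP q X, xs', ys', as'))"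
proof -
  from rule obtain xs ys as zs \<sigma> ds I where
    R: "(q, xs, ys, as) \<in> R" and xs': "xs' = xs @ ws"
    and ys': "ys' = map (trm_subst \<sigma>) ys @ map V ws @ map (\<lambda>z. V (\<sigma> z)) zs"
    and as': "as' = ds @ map (\<lambda>i. Pred BotP [V (zs ! i)]) (sorted_list_of_set I)"
    and zs: "set zs = exvars (q, xs, ys, as)"
    and \<sigma>: "\<forall>v. \<sigma> v \<noteq> v \<longrightarrow> v \<in> set zs"
    and ds: "list_all2 (decor ws) (map (subst \<sigma>) as) ds"
    unfolding decR_def by blast
  have "xs \<noteq> []" and "length ys = \<kappa>"
    using progressing R by auto
  have \<sigma>_params: "\<forall>x\<in>set xs. \<sigma> x = x"
    using \<sigma> zs by (auto simp: exvars_def)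
  obtain w ws'' where "ws = w # ws''"
    using \<open>ws \<noteq> []\<close> by (cases ws) auto
  then have "padded_decor \<kappa> ws (subst \<sigma> (Pto (V (hd xs)) ys)) (Pto (V (hd xs')) ys')"
    using \<sigma>_params \<open>xs \<noteq> []\<close> \<open>length ys = \<kappa>\<close> by (auto simp: xs' ys' intro: padded_decor.pto)
  moreover have "list_all2 (padded_decor \<kappa> ws) (map (subst \<sigma>) as) ds"
    using ds by (rule list_all2_mono) (rule padded_decor.decor)
  ultimately have "padded_decor \<kappa> ws (foldl Sep (subst \<sigma> (Pto (V (hd xs)) ys)) (map (subst \<sigma>) as))
      (foldl Sep (Pto (V (hd xs')) ys') ds)"
    by (intro padded_decor_foldl_Sep)
  then have "padded_decor \<kappa> ws (subst \<sigma> (body (q, xs, ys, as)))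
      (foldl Sep (foldl Sep (Pto (V (hd xs')) ys') ds)
        (map (\<lambda>t. Pred BotP [t]) (map (\<lambda>i. V (zs ! i)) (sorted_list_of_set I))))"
    unfolding body.simps subst_foldl_Sep by (rule padded_decor_foldl_bot)
  then show ?thesis
    using that R xs' \<sigma>_params by (simp add: as' comp_def)
qed

lemma restrict_map_Un: "m |` (A \<union> B) = m |` A ++ m |` B"
  by (auto simp: restrict_map_def map_add_def fun_eq_iff split: option.split)

locale expansion =
  fixes lb :: 'l and \<kappa> \<mu> :: nat and ws :: "'v list" and s :: "'v \<Rightarrow> 'l"
    and h' h :: "'l heap"
  assumes expands: "expands lb \<kappa> \<mu> ws s h' h"
    and cell_length: "\<forall>l\<in>dom h. length (the (h l)) = \<kappa>"
    and ws_nonempty: "ws \<noteq> []"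
    and s_hd_ws: "s (hd ws) \<noteq> lb"
begin

lemma expanded_cell_cases:
  assumes "h' l = Some v"
  obtains c bs where "h l = Some c" "v = c @ map s ws @ bs" "length c = \<kappa>"
  | "h l = None" "v = replicate (\<kappa> + length ws + \<mu>) lb"
proof -
  obtain M A where h': "h' = M ++ A" and "dom M \<inter> dom A = {}" and "dom M = dom h"
    and M: "\<forall>l\<in>dom M. \<exists>bs. length bs = \<mu> \<and> M l = Some (the (h l) @ map s ws @ bs)"
    and A: "\<forall>l\<in>dom A. A l = Some (replicate (\<kappa> + length ws + \<mu>) lb)
              \<and> (\<exists>l'\<in>dom M. l \<in> set (drop (\<kappa> + length ws) (the (M l'))))"
    using expands unfolding expands_def by (elim exE conjE) (rule that)
  show thesis
  proof (cases "l \<in> dom A")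
    case True
    with \<open>dom M \<inter> dom A = {}\<close> \<open>dom M = dom h\<close> have "h l = None" by auto
    with True A h' assms show thesis using that(2) by auto
  next
    case False
    with assms h' have "M l = Some v" by (simp add: map_add_dom_app_simps(3))
    then have "l \<in> dom h" using \<open>dom M = dom h\<close> by auto
    then obtain c where c: "h l = Some c" by auto
    with cell_length \<open>l \<in> dom h\<close> have "length c = \<kappa>" by force
    from M \<open>M l = Some v\<close> c obtain bs where "v = c @ map s ws @ bs" by force
    with c \<open>length c = \<kappa>\<close> show thesis by (intro that(1))
  qed
qed

lemma dom_subset: "dom h \<subseteq> dom h'"
  using expands unfolding expands_def by (elim exE conjE) auto

lemma expanded_cell:
  assumes "h' l = Some v" and "\<kappa> < length v" and "v ! \<kappa> \<noteq> lb"
  shows "h l = Some (take \<kappa> v)"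
  using assms(1) by (cases rule: expanded_cell_cases) (use assms in auto)

lemma padding_cell:
  assumes "h' l = Some (replicate (\<kappa> + length ws + \<mu>) lb)"
  shows "h l = None"
  using assms
proof (cases rule: expanded_cell_cases)
  case (1 c bs)
  have "\<kappa> < \<kappa> + length ws + \<mu>" using ws_nonempty by simp
  then have "lb = replicate (\<kappa> + length ws + \<mu>) lb ! \<kappa>" by simp
  also have "\<dots> = (c @ map s ws @ bs) ! \<kappa>" using 1 by simp
  also have "\<dots> = s (hd ws)"
    using \<open>length c = \<kappa>\<close> ws_nonempty by (cases ws) (simp_all add: nth_append)
  finally show ?thesis using s_hd_ws by simp
qed

lemma sat_BotP_disjoint:
  assumes "sat (decR \<kappa> \<mu> Pl ws R) lb t g (Pred BotP ts)" and "g \<subseteq>\<^sub>m h'"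
  shows "dom g \<inter> dom h = {}"
proof -
  from assms(1) obtain x t' where
    "sat (decR \<kappa> \<mu> Pl ws R) lb t' g (Pto (V x) (replicate (\<kappa> + length ws + \<mu>) BotT))"
    by (auto elim!: sat_PredE simp: decR_def)
  then have g: "g = [t' x \<mapsto> replicate (\<kappa> + length ws + \<mu>) lb]"
    by (auto elim: sat_PtoE)
  with assms(2) have "h' (t' x) = Some (replicate (\<kappa> + length ws + \<mu>) lb)"
    by (auto simp: map_le_def)
  then show ?thesis
    using padding_cell g by auto
qed

lemma sat_padded_decor:
  assumes "sat (decR \<kappa> \<mu> Pl ws R) lb t g f" and "g \<subseteq>\<^sub>m h'" and "\<forall>x. t x \<noteq> lb"
    and "padded_decor \<kappa> ws \<alpha> f" and progressing: "\<forall>r\<in>R. progressing \<kappa> r"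
  shows "sat R lb t (h |` dom g) \<alpha>"
  using assms(1-4)
proof (induction arbitrary: \<alpha> rule: sat.induct)
  case (sat_neq t a b g)
  then have "\<alpha> = Neq a b" by (cases \<alpha>) (auto simp: padded_decor_iff_decor)
  with sat_neq show ?case by (auto intro: sat.sat_neq)
next
  case (sat_eq t a b g)
  then have "\<alpha> = Eq a b" by (cases \<alpha>) (auto simp: padded_decor_iff_decor)
  with sat_eq show ?case by (auto intro: sat.sat_eq)
next
  case (sat_pto t a g ts')
  from \<open>padded_decor \<kappa> ws \<alpha> (Pto a ts')\<close> obtain ts w us
    where \<alpha>: "\<alpha> = Pto a ts" and ts': "ts' = ts @ V w # us" and "length ts = \<kappa>"
    by (rule padded_decor_PtoE)
  define l where "l = ev lb t a"
  have "h' l = Some (map (ev lb t) ts')"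
    using sat_pto.hyps(2) \<open>g \<subseteq>\<^sub>m h'\<close> by (auto simp: l_def map_le_def)
  then have "h l = Some (map (ev lb t) ts)"
    using expanded_cell \<open>length ts = \<kappa>\<close> \<open>\<forall>x. t x \<noteq> lb\<close> by (force simp: ts' nth_append)
  then have "h |` dom g = [l \<mapsto> map (ev lb t) ts]"
    using sat_pto.hyps(2) by (auto simp: l_def restrict_map_def fun_eq_iff)
  with sat_pto.hyps(1) show ?case
    unfolding \<alpha> l_def by (rule sat.sat_pto)
next
  case (sat_sep g1 g2 g t f1 f2)
  have "g1 \<subseteq>\<^sub>m h'" and "g2 \<subseteq>\<^sub>m h'"
    using sat_sep.hyps(1,2) \<open>g \<subseteq>\<^sub>m h'\<close> map_add_comm map_add_le_mapE by metis+
  from \<open>padded_decor \<kappa> ws \<alpha> (Sep f1 f2)\<close> show ?case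
  proof (cases rule: padded_decor_SepE)
    case (1 a b)
    have "dom (h |` dom g1) \<inter> dom (h |` dom g2) = {}" using sat_sep.hyps(1) by auto
    moreover have "h |` dom g = h |` dom g1 ++ h |` dom g2"
      using sat_sep.hyps(2) by (simp add: Un_commute restrict_map_Un)
    moreover have "sat R lb t (h |` dom g1) a" and "sat R lb t (h |` dom g2) b"
      using sat_sep.IH \<open>g1 \<subseteq>\<^sub>m h'\<close> \<open>g2 \<subseteq>\<^sub>m h'\<close> sat_sep.prems(2) 1(2,3) by blast+
    ultimately show ?thesis
      unfolding 1(1) by (rule sat.sat_sep)
  next
    case (2 ts)
    then have "dom g2 \<inter> dom h = {}"
      using sat_BotP_disjoint sat_sep.hyps(4) \<open>g2 \<subseteq>\<^sub>m h'\<close> by blast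
    then have "h |` dom g = h |` dom g1"
      using sat_sep.hyps(2) by (auto simp: restrict_map_def fun_eq_iff dom_def)
    then show ?thesis
      using sat_sep.IH(1) \<open>g1 \<subseteq>\<^sub>m h'\<close> sat_sep.prems(2) 2 by simp
  qed
next
  case (sat_or1 t g f1 f2)
  then obtain a b where "\<alpha> = Or a b" "decor ws a f1"
    by (cases \<alpha>) (auto simp: padded_decor_iff_decor)
  with sat_or1 show ?case by (auto intro: sat.sat_or1 padded_decor.decor)
next
  case (sat_or2 t g f2 f1)
  then obtain a b where "\<alpha> = Or a b" "decor ws b f2"
    by (cases \<alpha>) (auto simp: padded_decor_iff_decor)
  with sat_or2 show ?case by (auto intro: sat.sat_or2 padded_decor.decor)
next
  case (sat_ex l t x g f)
  then obtain a where \<alpha>: "\<alpha> = Ex x a" and "decor ws a f"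
    by (cases \<alpha>) (auto simp: padded_decor_iff_decor)
  have "\<forall>y. (t(x := l)) y \<noteq> lb" using sat_ex.hyps(1) sat_ex.prems(2) by simp
  with \<open>g \<subseteq>\<^sub>m h'\<close> \<open>decor ws a f\<close> have "sat R lb (t(x := l)) (h |` dom g) a"
    by (intro sat_ex.IH padded_decor.decor)
  with sat_ex.hyps(1) show ?case
    unfolding \<alpha> by (rule sat.sat_ex)
next
  case (sat_pred Q xs' ys' as' ts' t' t g)
  from \<open>padded_decor \<kappa> ws \<alpha> (Pred Q ts')\<close> obtain q ts X
    where \<alpha>: "\<alpha> = Pred q ts" and Q: "Q = DecP q X" and ts': "ts' = ts @ map V ws"
    by (cases \<alpha>) (auto simp: padded_decor_iff_decor)
  from sat_pred.hyps(1) progressing ws_nonempty obtain xs ys as \<sigma>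
    where R: "(q, xs, ys, as) \<in> R" and xs': "xs' = xs @ ws" and \<sigma>: "\<forall>x\<in>set xs. \<sigma> x = x"
      and body: "padded_decor \<kappa> ws (subst \<sigma> (body (q, xs, ys, as))) (body (Q, xs', ys', as'))"
    unfolding Q by (rule decR_body_padded_decor)
  have len: "length xs = length ts"
    using sat_pred.hyps(2) by (simp add: xs' ts')
  have store: "\<forall>v. (t' \<circ> \<sigma>) v \<noteq> lb"
    using sat_pred.hyps(3) by simp
  have params: "\<forall>i<length xs. (t' \<circ> \<sigma>) (xs ! i) = ev lb t (ts ! i)"
  proof (intro allI impI)
    fix i assume "i < length xs"
    then show "(t' \<circ> \<sigma>) (xs ! i) = ev lb t (ts ! i)"
      using sat_pred.hyps(4)[rule_format, of i] \<sigma> len by (simp add: xs' ts' nth_append)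
  qed
  have "sat R lb t' (h |` dom g) (subst \<sigma> (body (q, xs, ys, as)))"
    using sat_pred.IH \<open>g \<subseteq>\<^sub>m h'\<close> sat_pred.hyps(3) body by blast
  moreover have "qfree (body (q, xs, ys, as))"
    using progressing R by (blast intro: qfree_body)
  ultimately have "sat R lb (t' \<circ> \<sigma>) (h |` dom g) (body (q, xs, ys, as))"
    by (rule sat_subst)
  then show ?case
    unfolding \<alpha> by (rule sat.sat_pred[OF R len store params])
qed

end

theorem mainTheorem18:
  fixes R :: "('v, 'p) rule set"
    and \<phi> \<psi> \<alpha> :: "('v, 'p) form"
    and \<alpha>' :: "('v, 'p dpred) form"
    and ws :: "'v list"
    and \<kappa> \<mu> :: nat
    and lb :: 'l
    and s :: "'v \<Rightarrow> 'l"
    and h h' :: "'l heap"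
  assumes "finite R"
    and "\<forall>r\<in>R. progressing \<kappa> r"
    and "\<forall>r\<in>R. card (exvars r) = \<mu>"
    and "distinct ws" and "ws \<noteq> []" and "set ws = fv \<phi> \<union> fv \<psi>"
    and "\<forall>r\<in>R. set ws \<inter> rule_vars r = {}"
    and "no_pto \<alpha>"
    and "preds \<alpha> \<subseteq> reach R (preds \<phi>)"
    and "decor ws \<alpha> \<alpha>'"
    and "\<forall>x. s x \<noteq> lb"
    and "finite (dom h)" and "lb \<notin> dom h" and "\<forall>l\<in>dom h. length (the (h l)) = \<kappa>"
    and "finite (dom h')" and "lb \<notin> dom h'"
    and "sat (decR \<kappa> \<mu> (reach R (preds \<phi>)) ws R) lb s h' \<alpha>'"
    and "expands lb \<kappa> \<mu> ws s h' h"
  shows "sat R lb s h \<alpha>"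
proof -
  interpret expansion lb \<kappa> \<mu> ws s h' h
    by unfold_locales (simp_all add: assms(18,14,5,11))
  have "padded_decor \<kappa> ws \<alpha> \<alpha>'"
    using assms(10) by (rule padded_decor.decor)
  then have "sat R lb s (h |` dom h') \<alpha>"
    by (rule sat_padded_decor[OF assms(17) map_le_refl assms(11) _ assms(2)])
  moreover have "h |` dom h' = h"
    using dom_subset by (simp add: restrict_map_def fun_eq_iff) (metis domIff subsetD)
  ultimately show ?thesis by simp
qed

end
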